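(* Let $d\in\mathbb N$, $H>0$, $\eta>0$, let $R(x)=\sum_{a\in[d]}\log\frac1{x(a)}$ be the log-barrier on $\Delta_d$, let $x'\in\Delta_d$ have all coordinates positive, let $\ell\in\mathbb R^d$ with $\|\ell\|_\infty\le H$, define $F(x)=\eta\langle x,\ell\rangle+D_R(x,x')$ and $x^+=\arg\min_{x\in\Delta_d}F(x)$. If $\eta\le\frac1{8H}$, then for every $a\in[d]$, $$(1-8\eta\|\ell\|_\infty)x'(a)\le x^+(a)\le(1+8\eta\|\ell\|_\infty)x'(a).$$
   Context: $D_R(x,y)=\sum_a\big(\log\frac{y(a)}{x(a)}+\frac{x(a)-y(a)}{y(a)}\big)$ is the Bregman divergence of the log-barrier. *)

theory Defs
  imports Complex_Main
begin

text \<open>Vectors in R^d are functions nat => real, indexed by [d] = {1..d}.\<close>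

definition simplex :: "nat \<Rightarrow> (nat \<Rightarrow> real) set" where
  "simplex d = {x. (\<forall>a\<in>{1..d}. 0 \<le> x a) \<and> (\<Sum>a=1..d. x a) = 1}"

definition inner_d :: "nat \<Rightarrow> (nat \<Rightarrow> real) \<Rightarrow> (nat \<Rightarrow> real) \<Rightarrow> real" where
  "inner_d d x y = (\<Sum>a=1..d. x a * y a)"

definition linf_norm :: "nat \<Rightarrow> (nat \<Rightarrow> real) \<Rightarrow> real" where
  "linf_norm d l = Max (insert 0 ((\<lambda>a. \<bar>l a\<bar>) ` {1..d}))"

definition log_barrier :: "nat \<Rightarrow> (nat \<Rightarrow> real) \<Rightarrow> real" where
  "log_barrier d x = (\<Sum>a=1..d. ln (1 / x a))"

definition breg_logbarrier :: "nat \<Rightarrow> (nat \<Rightarrow> real) \<Rightarrow> (nat \<Rightarrow> real) \<Rightarrow> real" where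
  "breg_logbarrier d x y = (\<Sum>a=1..d. ln (y a / x a) + (x a - y a) / y a)"

end

theory Submission
  imports Defs
begin

text \<open>The objective is separable, so at an interior minimiser on the simplex all partial
  derivatives agree: \<open>1 / x\<^sup>+(a) = 1 / x'(a) + \<eta> \<ell>(a) - \<lambda>\<close> for a common multiplier \<open>\<lambda>\<close>.
  Since \<open>x\<^sup>+\<close> and \<open>x'\<close> both sum to one, the perturbations \<open>\<eta> \<ell>(a) - \<lambda>\<close> take both signs, hence
  are bounded by \<open>2 \<eta> \<parallel>\<ell>\<parallel>\<^sub>\<infinity> \<le> 1/4\<close>; a first-order estimate of \<open>1 / (1 + t)\<close> then gives the
  multiplicative bounds.\<close>

lemma abs_le_linf_norm: "i \<in> {1..d} \<Longrightarrow> \<bar>l i\<bar> \<le> linf_norm d l"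
  unfolding linf_norm_def by (intro Max_ge) auto

lemma abs_diff_le_twice_linf_norm:
  "i \<in> {1..d} \<Longrightarrow> j \<in> {1..d} \<Longrightarrow> \<bar>l i - l j\<bar> \<le> 2 * linf_norm d l"
  using abs_le_linf_norm[of i d l] abs_le_linf_norm[of j d l] by linarith

lemma simplex_le_one:
  assumes "x \<in> simplex d" "a \<in> {1..d}"
  shows "x a \<le> 1"
proof -
  have "x a \<le> (\<Sum>i=1..d. x i)"
    using assms by (intro member_le_sum) (auto simp: simplex_def)
  then show ?thesis using assms(1) by (simp add: simplex_def)
qed

lemma simplex_transfer_mass:
  assumes "x \<in> simplex d" "\<forall>i\<in>{1..d}. x i > 0" "a \<in> {1..d}" "b \<in> {1..d}"
    and "\<bar>t\<bar> < min (x a) (x b)"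
  defines "y \<equiv> \<lambda>i. x i + t * ((if i = a then 1 else 0) - (if i = b then 1 else 0))"
  shows "y \<in> simplex d" "\<forall>i\<in>{1..d}. y i > 0"
proof -
  show pos: "\<forall>i\<in>{1..d}. y i > 0"
    using assms(2,5) unfolding y_def by auto
  have "(\<Sum>i=1..d. (if i = a then 1 else 0) - (if i = b then 1 else 0)) = (0::real)"
    using assms(3,4) by (simp add: sum_subtractf)
  then have "(\<Sum>i=1..d. y i) = (\<Sum>i=1..d. x i)"
    by (simp add: y_def sum.distrib sum_distrib_left[symmetric])
  then show "y \<in> simplex d"
    using assms(1) pos by (auto simp: simplex_def less_imp_le)
qed

lemma separable_min_on_simplex_deriv_eq:
  fixes f :: "nat \<Rightarrow> real \<Rightarrow> real"
  assumes x: "x \<in> simplex d" "\<forall>i\<in>{1..d}. x i > 0"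
    and deriv: "\<And>i. i \<in> {1..d} \<Longrightarrow> (f i has_real_derivative f' i) (at (x i))"
    and min: "\<And>y. y \<in> simplex d \<Longrightarrow> \<forall>i\<in>{1..d}. y i > 0 \<Longrightarrow>
                 (\<Sum>i=1..d. f i (x i)) \<le> (\<Sum>i=1..d. f i (y i))"
    and ab: "a \<in> {1..d}" "b \<in> {1..d}"
  shows "f' a = f' b"
proof -
  define e :: "nat \<Rightarrow> real" where "e i = (if i = a then 1 else 0) - (if i = b then 1 else 0)" for i
  define \<phi> where "\<phi> t = (\<Sum>i=1..d. f i (x i + t * e i))" for t
  have "(\<phi> has_real_derivative (\<Sum>i=1..d. f' i * e i)) (at 0)"
    unfolding \<phi>_def
  proof (rule DERIV_sum)
    fix i assume "i \<in> {1..d}"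
    have "(f i has_real_derivative f' i) (at ((\<lambda>t. x i + t * e i) 0))"
      using deriv[OF \<open>i \<in> {1..d}\<close>] by simp
    moreover have "((\<lambda>t. x i + t * e i) has_real_derivative e i) (at 0)"
      by (auto intro!: derivative_eq_intros)
    ultimately show "((\<lambda>t. f i (x i + t * e i)) has_real_derivative f' i * e i) (at 0)"
      by (rule DERIV_chain2)
  qed
  moreover have "\<phi> 0 \<le> \<phi> t" if "\<bar>0 - t\<bar> < min (x a) (x b)" for t
    using min simplex_transfer_mass[OF x ab, of t] that unfolding \<phi>_def e_def by simp
  ultimately have "(\<Sum>i=1..d. f' i * e i) = 0"
    using x(2) ab by (intro DERIV_local_min[of \<phi> _ 0 "min (x a) (x b)"]) auto
  moreover have "(\<Sum>i=1..d. f' i * e i) = f' a - f' b"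
  proof -
    have "f' i * e i = (if i = a then f' i else 0) - (if i = b then f' i else 0)" for i
      by (simp add: e_def)
    then show ?thesis
      using ab by (simp only: sum_subtractf) simp
  qed
  ultimately show ?thesis by simp
qed

lemma sum_eq_obtains_le:
  fixes u v :: "'a \<Rightarrow> real"
  assumes "finite A" "A \<noteq> {}" "sum u A = sum v A"
  obtains i where "i \<in> A" "u i \<le> v i"
  using sum_strict_mono[OF assms(1,2), of v u] assms(3) by force

lemma reciprocal_shift_bounded_by_spread:
  fixes u v g :: "'a \<Rightarrow> real"
  assumes "finite A" "a \<in> A" "sum v A = sum u A"
    and pos: "\<And>i. i \<in> A \<Longrightarrow> 0 < u i \<and> 0 < v i"
    and recip: "\<And>i. i \<in> A \<Longrightarrow> 1 / v i = 1 / u i + (g i - \<mu>)"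
    and spread: "\<And>i j. i \<in> A \<Longrightarrow> j \<in> A \<Longrightarrow> \<bar>g i - g j\<bar> \<le> \<delta>"
  shows "\<bar>g a - \<mu>\<bar> \<le> \<delta>"
proof -
  obtain b where b: "b \<in> A" "v b \<le> u b"
    using sum_eq_obtains_le[OF assms(1) _ assms(3)] assms(2) by blast
  obtain b' where b': "b' \<in> A" "u b' \<le> v b'"
    using sum_eq_obtains_le[OF assms(1) _ assms(3)[symmetric]] assms(2) by blast
  have "1 / u b \<le> 1 / v b" "1 / v b' \<le> 1 / u b'"
    using b b' pos by (auto intro!: divide_left_mono)
  then have "\<mu> \<le> g b" "g b' \<le> \<mu>"
    using recip[OF b(1)] recip[OF b'(1)] by auto
  then show ?thesis
    using spread[OF assms(2) b(1)] spread[OF assms(2) b'(1)] by (auto simp: abs_le_iff)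
qed

lemma one_div_one_plus_bounds:
  fixes t s :: real
  assumes "\<bar>t\<bar> \<le> s" "s \<le> 1/4"
  shows "(1 - 4 * s) * (1 + t) \<le> 1" "1 \<le> (1 + 4 * s) * (1 + t)"
proof -
  have "(1 - 4 * s) * (1 + t) \<le> (1 - 4 * s) * (1 + s)"
    using assms by (intro mult_left_mono) auto
  also have "\<dots> \<le> 1" using assms by (simp add: algebra_simps)
  finally show "(1 - 4 * s) * (1 + t) \<le> 1" .
  have "1 \<le> (1 + 4 * s) * (1 - s)"
    using assms mult_left_mono[of s "1/4 * 3" s] by (simp add: algebra_simps)
  also have "\<dots> \<le> (1 + 4 * s) * (1 + t)"
    using assms by (intro mult_left_mono) auto
  finally show "1 \<le> (1 + 4 * s) * (1 + t)" .
qed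

lemma reciprocal_perturbation_bounds:
  fixes u v c s :: real
  assumes "0 < u" "u \<le> 1" "0 < v" "1 / v = 1 / u + c" "\<bar>c\<bar> \<le> s" "s \<le> 1/4"
  shows "(1 - 4 * s) * u \<le> v" "v \<le> (1 + 4 * s) * u"
proof -
  define t where "t = u * c"
  have "\<bar>t\<bar> \<le> \<bar>c\<bar>"
    using assms(1,2) by (simp add: t_def abs_mult mult_left_le_one_le)
  then have bounds: "(1 - 4 * s) * (1 + t) \<le> 1" "1 \<le> (1 + 4 * s) * (1 + t)"
    using one_div_one_plus_bounds assms(5,6) by auto
  have u_eq: "u = v * (1 + t)"
    using assms(1,3,4) unfolding t_def by (simp add: field_simps)
  show "(1 - 4 * s) * u \<le> v"
    using mult_left_mono[OF bounds(1), of v] assms(3) by (simp add: u_eq ac_simps)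
  show "v \<le> (1 + 4 * s) * u"
    using mult_left_mono[OF bounds(2), of v] assms(3) by (simp add: u_eq ac_simps)
qed

theorem lemma16:
  fixes d :: nat and H \<eta> :: real and x' xplus l :: "nat \<Rightarrow> real"
    and F :: "(nat \<Rightarrow> real) \<Rightarrow> real"
  assumes "H > 0" and "\<eta> > 0"
    and "x' \<in> simplex d" and "\<forall>a\<in>{1..d}. x' a > 0"
    and "linf_norm d l \<le> H"
    and "F = (\<lambda>x. \<eta> * inner_d d x l + breg_logbarrier d x x')"
    and "xplus \<in> simplex d" and "\<forall>a\<in>{1..d}. xplus a > 0"
    and "\<forall>x\<in>simplex d. (\<forall>a\<in>{1..d}. x a > 0) \<longrightarrow> F xplus \<le> F x"
    and "\<eta> \<le> 1 / (8 * H)"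
  shows "\<forall>a\<in>{1..d}.
           (1 - 8 * \<eta> * linf_norm d l) * x' a \<le> xplus a \<and>
           xplus a \<le> (1 + 8 * \<eta> * linf_norm d l) * x' a"
proof
  fix a assume a: "a \<in> {1..d}"
  define f where "f i u = \<eta> * (u * l i) + (ln (x' i / u) + (u - x' i) / x' i)" for i u
  define f' where "f' i = \<eta> * l i - 1 / xplus i + 1 / x' i" for i
  have F_sum: "F y = (\<Sum>i=1..d. f i (y i))" for y
    unfolding assms(6) f_def inner_d_def breg_logbarrier_def
    by (simp add: sum.distrib sum_distrib_left)
  have "(f i has_real_derivative f' i) (at (xplus i))" if "i \<in> {1..d}" for i
  proof -
    have "x' i > 0" "xplus i > 0" using that assms(4,8) by auto
    then show ?thesis unfolding f_def f'_def
      by (auto intro!: derivative_eq_intros simp: field_simps)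
  qed
  then have f'_eq: "f' i = f' a" if "i \<in> {1..d}" for i
    using separable_min_on_simplex_deriv_eq[OF assms(7,8), of f f' i a] assms(9) that a
    by (simp add: F_sum)
  have recip: "1 / xplus i = 1 / x' i + (\<eta> * l i - f' a)" if "i \<in> {1..d}" for i
    using f'_eq[OF that] unfolding f'_def by simp
  have shift: "\<bar>\<eta> * l a - f' a\<bar> \<le> \<eta> * (2 * linf_norm d l)"
  proof (rule reciprocal_shift_bounded_by_spread[of "{1..d}" a xplus x', OF _ a _ _ recip])
    show "sum xplus {1..d} = sum x' {1..d}"
      using assms(3,7) by (simp add: simplex_def)
    show "\<bar>\<eta> * l i - \<eta> * l j\<bar> \<le> \<eta> * (2 * linf_norm d l)" if "i \<in> {1..d}" "j \<in> {1..d}" for i j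
      using mult_left_mono[OF abs_diff_le_twice_linf_norm[OF that, where l = l], of \<eta>] assms(2)
      by (simp add: abs_mult flip: right_diff_distrib)
  qed (use assms(4,8) in auto)
  have "\<eta> * linf_norm d l \<le> \<eta> * H"
    using assms(2,5) by simp
  also have "\<eta> * H \<le> 1/8"
    using assms(1,10) by (simp add: field_simps)
  finally have small: "\<eta> * (2 * linf_norm d l) \<le> 1/4" by simp
  from reciprocal_perturbation_bounds[OF _ simplex_le_one[OF assms(3) a] _ recip[OF a] shift small]
  show "(1 - 8 * \<eta> * linf_norm d l) * x' a \<le> xplus a \<and>
        xplus a \<le> (1 + 8 * \<eta> * linf_norm d l) * x' a"
    using assms(4,8) a by (simp add: mult.assoc)
qed

end
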